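(* Let $q$ be a prime power, let $F_1\subsetneq F_0\subseteq\mathbb{F}_q^n$ be linear codes, and let $G_E\in\mathbb{F}_q^{e\times n}$ have row space $E$ with $F_0\cap E=\{\underline{0}\}$. In the QSS scheme given by $\mathrm{ECSS}(F_0,F_1,G_E)$, when the combiner has access to none of the extension qudits, the secret can be recovered from every choice of $\tau$ qudits out of the $n$ original qudits (i.e. every $J\subseteq[n]$ with $|J|=\tau$ is authorized) if and only if $\tau\geq\tau_0$, where $$\tau_0=n-\min\{\mathrm{wt}((F_0+E)\setminus(F_1+E)),\ \mathrm{wt}(F_1^\perp\setminus F_0^\perp)\}+1.$$
   Context: For linear codes $L_1\subsetneq L_0\subseteq\mathbb{F}_q^n$, $\mathrm{wt}(L_0\setminus L_1)=\min\{\mathrm{wt}(\underline{c}):\underline{c}\in L_0,\ \underline{c}\notin L_1\}$ (Hamming weight); $L^\perp$ is the dual code. Let $F_0,F_1$ have dimensions $f_0,f_1$, and let $G_{F_0}=\begin{bmatrix}G_{F_0/F_1}\\ G_{F_1}\end{bmatrix}$ be a generator matrix of $F_0$ with $G_{F_1}$ generating $F_1$ and $G_{F_0/F_1}$ generating a complement of $F_1$ in $F_0$. The extended CSS code $\mathrm{ECSS}(F_0,F_1,G_E)$ is the CSS code of $C_0$ over $C_1$ where $C_0,C_1\subseteq\mathbb{F}_q^{n+e}$ are generated by $\begin{bmatrix}G_{F_0}&0\\ G_E&I_e\end{bmatrix}$ and $\begin{bmatrix}G_{F_1}&0\\ G_E&I_e\end{bmatrix}$; its encoding maps (up to normalization,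 extended linearly) $|\underline{s}\rangle$, $\underline{s}\in\mathbb{F}_q^{f_0-f_1}$, to $\sum_{\underline{r}_1\in\mathbb{F}_q^{f_1},\underline{r}_2\in\mathbb{F}_q^{e}}|[\,G_{F_0/F_1}^T\ G_{F_1}^T\ G_E^T\,](\underline{s};\underline{r}_1;\underline{r}_2)\rangle|\underline{r}_2\rangle$. The first $n$ qudits are the original qudits and the last $e$ the extension qudits; qudit $j$ is given to party $j\in[n+e]$. A set of parties is authorized if the secret can be recovered from their qudits. *)

theory Defs
  imports Complex_Main
begin

(* Vectors over a finite field 'a are functions nat => 'a; a vector of length m
   (or a basis label of qudits in a set S) is a function vanishing outside S.
   Coordinates/qudits are numbered 0,1,... (0-based). *)

definition lab :: "nat set \<Rightarrow> (nat \<Rightarrow> 'a::zero) set" where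
  "lab S = {x. \<forall>i. i \<notin> S \<longrightarrow> x i = 0}"

abbreviation Vn :: "nat \<Rightarrow> (nat \<Rightarrow> 'a::zero) set" where
  "Vn m \<equiv> lab {0..<m}"

definition zerov :: "nat \<Rightarrow> 'a::zero" where "zerov = (\<lambda>_. 0)"

definition vadd :: "(nat \<Rightarrow> 'a::plus) \<Rightarrow> (nat \<Rightarrow> 'a) \<Rightarrow> nat \<Rightarrow> 'a" where
  "vadd x y = (\<lambda>i. x i + y i)"

definition linear_code :: "nat \<Rightarrow> (nat \<Rightarrow> 'a::field) set \<Rightarrow> bool" where
  "linear_code n L \<longleftrightarrow> L \<subseteq> Vn n \<and> zerov \<in> L \<and>
     (\<forall>x\<in>L. \<forall>y\<in>L. vadd x y \<in> L) \<and> (\<forall>c x. x \<in> L \<longrightarrow> (\<lambda>i. c * x i) \<in> L)"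

(* linear combination of the first m rows of matrix G (G j i = entry in row j, column i) *)
definition comb :: "(nat \<Rightarrow> nat \<Rightarrow> 'a::field) \<Rightarrow> nat \<Rightarrow> (nat \<Rightarrow> 'a) \<Rightarrow> nat \<Rightarrow> 'a" where
  "comb G m r = (\<lambda>i. \<Sum>j<m. r j * G j i)"

definition rowspace :: "(nat \<Rightarrow> nat \<Rightarrow> 'a::field) \<Rightarrow> nat \<Rightarrow> (nat \<Rightarrow> 'a) set" where
  "rowspace G m = {comb G m r | r. True}"

definition is_matrix :: "(nat \<Rightarrow> nat \<Rightarrow> 'a::zero) \<Rightarrow> nat \<Rightarrow> nat \<Rightarrow> bool" where
  "is_matrix G m n \<longleftrightarrow> (\<forall>j i. (j \<ge> m \<or> i \<ge> n) \<longrightarrow> G j i = 0)"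

definition rows_independent :: "(nat \<Rightarrow> nat \<Rightarrow> 'a::field) \<Rightarrow> nat \<Rightarrow> bool" where
  "rows_independent G m \<longleftrightarrow> (\<forall>r. comb G m r = zerov \<longrightarrow> (\<forall>j<m. r j = 0))"

definition generator_matrix :: "(nat \<Rightarrow> nat \<Rightarrow> 'a::field) \<Rightarrow> nat \<Rightarrow> nat \<Rightarrow> (nat \<Rightarrow> 'a) set \<Rightarrow> bool" where
  "generator_matrix G m n L \<longleftrightarrow> is_matrix G m n \<and> rows_independent G m \<and> rowspace G m = L"

definition stack :: "(nat \<Rightarrow> nat \<Rightarrow> 'a::zero) \<Rightarrow> nat \<Rightarrow> (nat \<Rightarrow> nat \<Rightarrow> 'a) \<Rightarrow> nat \<Rightarrow> nat \<Rightarrow> 'a" where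
  "stack A k B = (\<lambda>j. if j < k then A j else B (j - k))"

definition code_sum :: "(nat \<Rightarrow> 'a::plus) set \<Rightarrow> (nat \<Rightarrow> 'a) set \<Rightarrow> (nat \<Rightarrow> 'a) set" where
  "code_sum L M = {vadd x y | x y. x \<in> L \<and> y \<in> M}"

definition dual :: "nat \<Rightarrow> (nat \<Rightarrow> 'a::field) set \<Rightarrow> (nat \<Rightarrow> 'a) set" where
  "dual n L = {y \<in> Vn n. \<forall>x\<in>L. (\<Sum>i<n. x i * y i) = 0}"

definition wt :: "nat \<Rightarrow> (nat \<Rightarrow> 'a::zero) \<Rightarrow> nat" where
  "wt n x = card {i. i < n \<and> x i \<noteq> 0}"

definition wt_diff :: "nat \<Rightarrow> (nat \<Rightarrow> 'a::zero) set \<Rightarrow> (nat \<Rightarrow> 'a) set \<Rightarrow> nat" where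
  "wt_diff n L0 L1 = Min (wt n ` (L0 - L1))"

(* ---------------- the quantum secret sharing scheme ECSS(F0,F1,G_E) ----------------
   Parameters: n original qudits, e extension qudits, k = f0 - f1 secret qudits,
   G01 = G_{F0/F1} (k x n), G1 = G_{F1} (f1 x n), GE = G_E (e x n).
   Basis of m qudits: labels x in Vn m; a state is a function from labels to complex. *)

definition ext_vec :: "nat \<Rightarrow> (nat \<Rightarrow> 'a::zero) \<Rightarrow> (nat \<Rightarrow> 'a) \<Rightarrow> nat \<Rightarrow> 'a" where
  "ext_vec n c r2 = (\<lambda>i. if i < n then c i else r2 (i - n))"

(* amplitude of the normalized encoded state of the secret basis state |s> at basis label x *)
definition enc_amp :: "nat \<Rightarrow> nat \<Rightarrow> nat \<Rightarrow> nat \<Rightarrow> (nat \<Rightarrow> nat \<Rightarrow> 'a::{field,finite}) \<Rightarrow>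
    (nat \<Rightarrow> nat \<Rightarrow> 'a) \<Rightarrow> (nat \<Rightarrow> nat \<Rightarrow> 'a) \<Rightarrow> (nat \<Rightarrow> 'a) \<Rightarrow> (nat \<Rightarrow> 'a) \<Rightarrow> complex" where
  "enc_amp n e k f1 G01 G1 GE s x =
     of_nat (card {(r1, r2). r1 \<in> Vn f1 \<and> r2 \<in> Vn e \<and>
        x = ext_vec n (vadd (vadd (comb G01 k s) (comb G1 f1 r1)) (comb GE e r2)) r2})
     / complex_of_real (sqrt (real (card (UNIV :: 'a set) ^ (f1 + e))))"

definition encode :: "nat \<Rightarrow> nat \<Rightarrow> nat \<Rightarrow> nat \<Rightarrow> (nat \<Rightarrow> nat \<Rightarrow> 'a::{field,finite}) \<Rightarrow>
    (nat \<Rightarrow> nat \<Rightarrow> 'a) \<Rightarrow> (nat \<Rightarrow> nat \<Rightarrow> 'a) \<Rightarrow> ((nat \<Rightarrow> 'a) \<Rightarrow> complex) \<Rightarrow> (nat \<Rightarrow> 'a) \<Rightarrow> complex" where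
  "encode n e k f1 G01 G1 GE phi x = (\<Sum>s\<in>Vn k. phi s * enc_amp n e k f1 G01 G1 GE s x)"

(* reduced density matrix on the qudits A of a pure state psi on the qudits {0..<N} *)
definition reduced :: "nat \<Rightarrow> nat set \<Rightarrow> ((nat \<Rightarrow> 'a::{zero,plus}) \<Rightarrow> complex) \<Rightarrow>
    (nat \<Rightarrow> 'a) \<Rightarrow> (nat \<Rightarrow> 'a) \<Rightarrow> complex" where
  "reduced N A psi a a' = (\<Sum>b\<in>lab ({0..<N} - A). psi (vadd a b) * cnj (psi (vadd a' b)))"

(* a quantum channel (Kraus list) from the qudits A to the secret space Vn k is trace preserving *)
definition trace_preserving :: "nat set \<Rightarrow> nat \<Rightarrow> ((nat \<Rightarrow> 'a::zero) \<Rightarrow> (nat \<Rightarrow> 'a) \<Rightarrow> complex) list \<Rightarrow> bool" where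
  "trace_preserving A k Ks \<longleftrightarrow> (\<forall>a\<in>lab A. \<forall>a'\<in>lab A.
     (\<Sum>K\<leftarrow>Ks. \<Sum>t\<in>Vn k. cnj (K t a) * K t a') = (if a = a' then 1 else 0))"

definition apply_channel :: "nat set \<Rightarrow> ((nat \<Rightarrow> 'a::zero) \<Rightarrow> (nat \<Rightarrow> 'a) \<Rightarrow> complex) list \<Rightarrow>
    ((nat \<Rightarrow> 'a) \<Rightarrow> (nat \<Rightarrow> 'a) \<Rightarrow> complex) \<Rightarrow> (nat \<Rightarrow> 'a) \<Rightarrow> (nat \<Rightarrow> 'a) \<Rightarrow> complex" where
  "apply_channel A Ks rho t t' =
     (\<Sum>K\<leftarrow>Ks. \<Sum>a\<in>lab A. \<Sum>a'\<in>lab A. K t a * rho a a' * cnj (K t' a'))"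

definition authorized :: "nat \<Rightarrow> nat \<Rightarrow> nat \<Rightarrow> nat \<Rightarrow> (nat \<Rightarrow> nat \<Rightarrow> 'a::{field,finite}) \<Rightarrow>
    (nat \<Rightarrow> nat \<Rightarrow> 'a) \<Rightarrow> (nat \<Rightarrow> nat \<Rightarrow> 'a) \<Rightarrow> nat set \<Rightarrow> bool" where
  "authorized n e k f1 G01 G1 GE A \<longleftrightarrow>
     (\<exists>Ks. trace_preserving A k Ks \<and>
        (\<forall>phi. \<forall>t\<in>Vn k. \<forall>t'\<in>Vn k.
           apply_channel A Ks (reduced (n + e) A (encode n e k f1 G01 G1 GE phi)) t t'
             = phi t * cnj (phi t')))"

end

theory Submission
  imports Defs "HOL-Library.Function_Algebras" "HOL-Library.FuncSet"
begin

(* Write E for the row space of G_E.  If some x in (F0 + E) - (F1 + E) vanishes on J, then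
   x = G_{F0/F1}^T s + p + G_E^T r with s <> 0 and p in F1; the extended vector (x, r) is supported
   outside J, and translating by it maps the encoding of |s> onto that of |0>, so the qudits in J
   hold the same state for both.  If some y in F1^perp - F0^perp vanishes on J, the qudits outside
   J, which include all extension qudits, can compute the syndrome <c - G_E^T r, y> of a basis
   label (c, r); it separates |s> from |0>, so J cannot see their relative phase.  If neither
   obstruction occurs, duality for F1 punctured at J lets us shift each G_{F0/F1}^T s by a
   codeword of F1 to a vector supported on J, after which the J-part of any basis label in the
   encoding of |s> determines s, and a classical decoder on J recovers the secret.  Finally, every
   tau-subset of [n] meets the support of each vector of a finite set X iff
   tau > n - min (wt ` X). *)

section \<open>Vectors with prescribed support and generator matrices\<close>

lemma vadd_eq [simp]: "vadd x y = x + y"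
  by (simp add: vadd_def fun_eq_iff)

lemma zerov_eq [simp]: "zerov = 0"
  by (simp add: zerov_def fun_eq_iff)

lemma code_sum_eq: "code_sum L M = {x + y | x y. x \<in> L \<and> y \<in> M}"
  by (simp add: code_sum_def)

lemma mem_code_sum: "x \<in> L \<Longrightarrow> y \<in> M \<Longrightarrow> x + y \<in> code_sum L M"
  by (auto simp: code_sum_eq)

lemma lab_zero [simp]: "0 \<in> lab S"
  by (simp add: lab_def)

lemma lab_add: "x \<in> lab S \<Longrightarrow> y \<in> lab S \<Longrightarrow> x + y \<in> lab (S :: nat set)"
  for x y :: "nat \<Rightarrow> 'a::monoid_add"
  by (simp add: lab_def)

lemma lab_diff: "x \<in> lab S \<Longrightarrow> y \<in> lab S \<Longrightarrow> x - y \<in> lab (S :: nat set)"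
  for x y :: "nat \<Rightarrow> 'a::group_add"
  by (simp add: lab_def)

lemma lab_mono: "x \<in> lab S \<Longrightarrow> S \<subseteq> T \<Longrightarrow> x \<in> lab T"
  by (auto simp: lab_def)

lemma bij_betw_lab_PiE:
  "bij_betw (\<lambda>x. restrict x S) (lab S) (PiE S (\<lambda>_. UNIV :: 'a::zero set))"
proof (rule bij_betwI[where g = "\<lambda>f i. if i \<in> S then f i else 0"])
  show "(\<lambda>f i. if i \<in> S then f i else 0) \<in> PiE S (\<lambda>_. UNIV :: 'a set) \<rightarrow> lab S"
    by (auto simp: lab_def)
qed (auto simp: lab_def fun_eq_iff PiE_def extensional_def)

lemma finite_lab: "finite S \<Longrightarrow> finite (lab S :: (nat \<Rightarrow> 'a::{zero,finite}) set)"
  using bij_betw_finite[OF bij_betw_lab_PiE[of S, where 'a = 'a]] by (simp add: finite_PiE)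

lemma card_lab:
  "finite S \<Longrightarrow> card (lab S :: (nat \<Rightarrow> 'a::{zero,finite}) set) = card (UNIV :: 'a set) ^ card S"
  using bij_betw_same_card[OF bij_betw_lab_PiE[of S, where 'a = 'a]] by (simp add: card_PiE)

lemma bij_betw_lab_split:
  assumes "J \<subseteq> X"
  shows "bij_betw (\<lambda>(a, b). a + b) (lab J \<times> lab (X - J)) (lab X :: (nat \<Rightarrow> 'a::monoid_add) set)"
proof (rule bij_betwI[where g = "\<lambda>x. (\<lambda>i. if i \<in> J then x i else 0, \<lambda>i. if i \<in> J then 0 else x i)"])
  show "(\<lambda>(a, b). a + b) \<in> lab J \<times> lab (X - J) \<rightarrow> (lab X :: (nat \<Rightarrow> 'a) set)"
    using assms by (auto simp: lab_def)
  show "(\<lambda>x. (\<lambda>i. if i \<in> J then x i else 0, \<lambda>i. if i \<in> J then 0 else x i))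
      \<in> lab X \<rightarrow> lab J \<times> lab (X - J)"
    by (auto simp: lab_def)
qed (auto simp: lab_def fun_eq_iff)

lemma comb_add: "comb G m (r + r') = comb G m r + comb G m r'"
  by (simp add: comb_def fun_eq_iff sum.distrib distrib_right)

lemma comb_diff: "comb G m (r - r') = comb G m r - comb G m r'"
  by (simp add: comb_def fun_eq_iff sum_subtractf left_diff_distrib)

lemma comb_zero [simp]: "comb G m 0 = 0"
  by (simp add: comb_def fun_eq_iff)

lemma comb_truncate: "comb G m (\<lambda>j. if j < m then r j else 0) = comb G m r"
  by (simp add: comb_def)

lemma comb_in_Vn: "is_matrix G m n \<Longrightarrow> comb G m r \<in> Vn n"
  by (simp add: lab_def comb_def is_matrix_def)

lemma rowspace_eq_image: "rowspace G m = comb G m ` Vn m"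
proof -
  have "comb G m r \<in> comb G m ` Vn m" for r
    using comb_truncate[of G m r]
    by (intro image_eqI[where x = "\<lambda>j. if j < m then r j else 0"]) (auto simp: lab_def)
  then show ?thesis by (auto simp: rowspace_def)
qed

lemma inj_on_comb:
  assumes "rows_independent G m"
  shows "inj_on (comb G m) (Vn m)"
proof (rule inj_onI)
  fix r r' assume r: "r \<in> Vn m" "r' \<in> Vn m" "comb G m r = comb G m r'"
  then have "comb G m (r - r') = zerov" by (simp add: comb_diff)
  then have "r j - r' j = 0" if "j < m" for j
    using assms that by (auto simp: rows_independent_def)
  then show "r = r'" using r by (auto simp: lab_def fun_eq_iff) (metis not_less)
qed

lemma comb_stack:
  "comb (stack A k B) (k + f) r = comb A k r + comb B f (\<lambda>j. r (k + j))"
proof -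
  have "(\<Sum>j<k + f. r j * stack A k B j i) = (\<Sum>j<k. r j * A j i) + (\<Sum>j<f. r (k + j) * B j i)" for i
    by (induction f) (simp_all add: stack_def)
  then show ?thesis by (simp add: comb_def fun_eq_iff)
qed

section \<open>Separation by dual vectors\<close>

definition linear_subspace :: "(nat \<Rightarrow> 'a::field) set \<Rightarrow> bool" where
  "linear_subspace U \<longleftrightarrow> 0 \<in> U \<and> (\<forall>x\<in>U. \<forall>y\<in>U. x + y \<in> U) \<and> (\<forall>c. \<forall>x\<in>U. (\<lambda>i. c * x i) \<in> U)"

lemma linear_code_iff: "linear_code n L \<longleftrightarrow> L \<subseteq> Vn n \<and> linear_subspace L"
  by (auto simp: linear_code_def linear_subspace_def)

lemma linear_subspace_zero: "linear_subspace U \<Longrightarrow> 0 \<in> U"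
  by (simp add: linear_subspace_def)

lemma linear_subspace_add: "linear_subspace U \<Longrightarrow> x \<in> U \<Longrightarrow> y \<in> U \<Longrightarrow> x + y \<in> U"
  by (simp add: linear_subspace_def)

lemma linear_subspace_scale: "linear_subspace U \<Longrightarrow> x \<in> U \<Longrightarrow> (\<lambda>i. c * x i) \<in> U"
  by (simp add: linear_subspace_def)

lemma linear_subspace_diff:
  assumes "linear_subspace U" "x \<in> U" "y \<in> U"
  shows "x - y \<in> U"
proof -
  have "x - y = x + (\<lambda>i. (- 1) * y i)"
    by (simp add: fun_eq_iff)
  then show ?thesis
    using assms by (simp only: linear_subspace_add linear_subspace_scale)
qed

lemma linear_subspace_image:
  assumes U: "linear_subspace U"
    and add: "\<And>x y. f (x + y) = f x + f y"
    and scale: "\<And>c x. f (\<lambda>i. c * x i) = (\<lambda>i. c * f x i)"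
  shows "linear_subspace (f ` U)"
proof -
  have "f 0 = 0" using add[of 0 0] by simp
  then have "0 \<in> f ` U" using linear_subspace_zero[OF U] by (metis image_eqI)
  moreover have "x + y \<in> f ` U" if "x \<in> f ` U" "y \<in> f ` U" for x y
    using that linear_subspace_add[OF U] by (auto simp flip: add)
  moreover have "(\<lambda>i. c * x i) \<in> f ` U" if "x \<in> f ` U" for c x
    using that linear_subspace_scale[OF U] by (auto simp flip: scale)
  ultimately show ?thesis by (simp add: linear_subspace_def)
qed

lemma linear_subspace_UNIV: "linear_subspace UNIV"
  by (simp add: linear_subspace_def)

lemma linear_subspace_rowspace: "linear_subspace (rowspace G m)"
proof -
  have "rowspace G m = comb G m ` UNIV"
    by (auto simp: rowspace_def)
  moreover have "comb G m (\<lambda>j. c * r j) = (\<lambda>i. c * comb G m r i)" for c r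
    by (simp add: comb_def fun_eq_iff sum_distrib_left mult.assoc)
  ultimately show ?thesis
    using linear_subspace_image[OF linear_subspace_UNIV comb_add[of G m]] by simp
qed

lemma linear_subspace_code_sum:
  assumes L: "linear_subspace L" and M: "linear_subspace M"
  shows "linear_subspace (code_sum L M)"
proof -
  have "0 \<in> code_sum L M"
    using mem_code_sum[OF linear_subspace_zero[OF L] linear_subspace_zero[OF M]] by simp
  moreover have "x + y \<in> code_sum L M" if xy: "x \<in> code_sum L M" "y \<in> code_sum L M" for x y
  proof -
    obtain a b a' b' where "a \<in> L" "b \<in> M" "a' \<in> L" "b' \<in> M" "x = a + b" "y = a' + b'"
      using xy by (auto simp: code_sum_eq)
    then have "x + y = (a + a') + (b + b')" "a + a' \<in> L" "b + b' \<in> M"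
      using linear_subspace_add L M by (auto simp: algebra_simps)
    then show ?thesis by (simp add: mem_code_sum)
  qed
  moreover have "(\<lambda>i. c * x i) \<in> code_sum L M" if x: "x \<in> code_sum L M" for c x
  proof -
    obtain a b where "a \<in> L" "b \<in> M" "x = a + b"
      using x by (auto simp: code_sum_eq)
    then have "(\<lambda>i. c * x i) = (\<lambda>i. c * a i) + (\<lambda>i. c * b i)"
      "(\<lambda>i. c * a i) \<in> L" "(\<lambda>i. c * b i) \<in> M"
      using linear_subspace_scale L M by (auto simp: fun_eq_iff distrib_left)
    then show ?thesis by (simp add: mem_code_sum)
  qed
  ultimately show ?thesis by (simp add: linear_subspace_def)
qed

definition eliminate :: "nat \<Rightarrow> (nat \<Rightarrow> 'a::field) \<Rightarrow> (nat \<Rightarrow> 'a) \<Rightarrow> nat \<Rightarrow> 'a" where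
  "eliminate i u x = (\<lambda>j. x j - x i / u i * u j)"

lemma eliminate_in_lab:
  assumes "u i \<noteq> 0" "x \<in> lab (insert i A)" "u \<in> lab (insert i A)"
  shows "eliminate i u x \<in> lab A"
proof -
  have "eliminate i u x j = 0" if "j \<notin> A" for j
    using assms that by (cases "j = i") (auto simp: lab_def eliminate_def)
  then show ?thesis by (simp add: lab_def)
qed

lemma linear_subspace_eliminate: "linear_subspace U \<Longrightarrow> linear_subspace (eliminate i u ` U)"
  by (rule linear_subspace_image)
    (simp_all add: eliminate_def fun_eq_iff add_divide_distrib ring_distribs)

lemma eliminate_notin_image:
  assumes U: "linear_subspace U" and u: "u \<in> U" "u i \<noteq> 0" and w: "w \<notin> U"
  shows "eliminate i u w \<notin> eliminate i u ` U"
proof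
  assume "eliminate i u w \<in> eliminate i u ` U"
  then obtain v where v: "v \<in> U" "eliminate i u w = eliminate i u v" by blast
  have "w = v + (\<lambda>j. ((w i - v i) / u i) * u j)"
    using v(2) by (simp add: eliminate_def fun_eq_iff diff_divide_distrib algebra_simps)
  moreover have "v + (\<lambda>j. ((w i - v i) / u i) * u j) \<in> U"
    using U u v(1) by (intro linear_subspace_add linear_subspace_scale)
  ultimately show False using w by simp
qed

definition separable :: "nat set \<Rightarrow> (nat \<Rightarrow> 'a::field) set \<Rightarrow> (nat \<Rightarrow> 'a) \<Rightarrow> bool" where
  "separable A U w \<longleftrightarrow>
    (\<exists>y\<in>lab A. (\<forall>u\<in>U. (\<Sum>i\<in>A. u i * y i) = 0) \<and> (\<Sum>i\<in>A. w i * y i) \<noteq> 0)"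

lemma separable_insert_eliminate:
  assumes "finite A" "i \<notin> A" "u i \<noteq> 0" "separable A (eliminate i u ` U) (eliminate i u w)"
  shows "separable (insert i A) U w"
proof -
  obtain y where y: "y \<in> lab A" "\<forall>v\<in>U. (\<Sum>j\<in>A. eliminate i u v j * y j) = 0"
    "(\<Sum>j\<in>A. eliminate i u w j * y j) \<noteq> 0"
    using assms(4) by (auto simp: separable_def)
  define y' where "y' = y(i := - (\<Sum>j\<in>A. u j * y j) / u i)"
  have "(\<Sum>j\<in>insert i A. x j * y' j) = (\<Sum>j\<in>A. eliminate i u x j * y j)" for x
  proof -
    have "(\<Sum>j\<in>A. x j * y' j) = (\<Sum>j\<in>A. x j * y j)"
      using assms(2) by (intro sum.cong) (auto simp: y'_def)
    moreover have "(\<Sum>j\<in>A. eliminate i u x j * y j)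
        = (\<Sum>j\<in>A. x j * y j) - x i / u i * (\<Sum>j\<in>A. u j * y j)"
      by (simp add: eliminate_def left_diff_distrib sum_subtractf sum_distrib_left mult.assoc)
    ultimately show ?thesis
      using assms(1-3) by (simp add: y'_def)
  qed
  moreover have "y' \<in> lab (insert i A)"
    using y(1) by (auto simp: y'_def lab_def)
  ultimately show ?thesis
    using y(2,3) unfolding separable_def by (intro bexI[of _ y']) simp_all
qed

lemma separable_insert:
  assumes "finite A" "i \<notin> A" "separable A U w"
  shows "separable (insert i A) U w"
proof -
  obtain y where y: "y \<in> lab A" "\<forall>u\<in>U. (\<Sum>j\<in>A. u j * y j) = 0" "(\<Sum>j\<in>A. w j * y j) \<noteq> 0"
    using assms(3) by (auto simp: separable_def)
  have "y i = 0" using y(1) assms(2) by (simp add: lab_def)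
  then have "(\<Sum>j\<in>insert i A. x j * y j) = (\<Sum>j\<in>A. x j * y j)" for x
    using assms(1,2) by simp
  moreover have "y \<in> lab (insert i A)" using y(1) by (rule lab_mono) auto
  ultimately show ?thesis
    using y(2,3) unfolding separable_def by (intro bexI[of _ y]) simp_all
qed

lemma separable_insert_coordinate:
  assumes "finite A" "i \<notin> A" "\<forall>u\<in>U. u i = 0" "w i \<noteq> 0"
  shows "separable (insert i A) U w"
proof -
  define y where "y = (\<lambda>j. if j = i then 1 else 0 :: 'a)"
  have "(\<Sum>j\<in>insert i A. x j * y j) = x i" for x
    using assms(1,2) by (simp add: y_def sum.neutral)
  moreover have "y \<in> lab (insert i A)" by (simp add: y_def lab_def)
  ultimately show ?thesis
    using assms(3,4) unfolding separable_def by (intro bexI[of _ y]) simp_all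
qed

lemma separable_if_notin:
  assumes "finite A" "linear_subspace U" "U \<subseteq> lab A" "w \<in> lab A" "w \<notin> U"
  shows "separable A U w"
  using assms
proof (induction A arbitrary: U w rule: finite_induct)
  case empty
  then have "w = 0" by (simp add: lab_def fun_eq_iff)
  then have False using empty(4) linear_subspace_zero[OF empty(1)] by blast
  then show ?case ..
next
  case (insert i A)
  consider (pivot) u where "u \<in> U" "u i \<noteq> 0" | (no_pivot) "\<forall>u\<in>U. u i = 0" by blast
  then show ?case
  proof cases
    case pivot
    then have "u \<in> lab (insert i A)" using insert.prems(2) by blast
    then have "eliminate i u x \<in> lab A" if "x \<in> insert w U" for x
      using that insert.prems(2,3) pivot(2) by (auto intro: eliminate_in_lab)
    then have "eliminate i u ` U \<subseteq> lab A" "eliminate i u w \<in> lab A"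
      by auto
    then have "separable A (eliminate i u ` U) (eliminate i u w)"
      using insert.IH[OF linear_subspace_eliminate[OF insert.prems(1)]]
        eliminate_notin_image[OF insert.prems(1) pivot insert.prems(4)] by simp
    then show ?thesis by (rule separable_insert_eliminate[where u = u, OF insert.hyps pivot(2)])
  next
    case no_pivot
    show ?thesis
    proof (cases "w i = 0")
      case True
      have "x \<in> lab A" if "x \<in> insert w U" for x
      proof -
        have "x \<in> lab (insert i A)" "x i = 0"
          using that insert.prems(2,3) no_pivot True by auto
        then show ?thesis by (auto simp: lab_def)
      qed
      then have "U \<subseteq> lab A" "w \<in> lab A" by auto
      then have "separable A U w"
        using insert.IH[OF insert.prems(1)] insert.prems(4) by simp
      then show ?thesis by (rule separable_insert[OF insert.hyps])
    next
      case False
      with insert.hyps no_pivot show ?thesis by (rule separable_insert_coordinate)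
    qed
  qed
qed

lemma separating_dual_codeword_vanishing_on:
  assumes L: "linear_code n L" and f: "f \<in> Vn n"
    and no_agree: "\<not> (\<exists>p\<in>L. \<forall>i<n. i \<notin> J \<longrightarrow> f i = p i)"
  obtains y where "y \<in> dual n L" "(\<Sum>i<n. f i * y i) \<noteq> 0" "\<forall>i\<in>J. y i = 0"
proof -
  define A where "A = {0..<n} - J"
  define res where "res x = (\<lambda>i. if i \<in> A then x i else 0)" for x :: "nat \<Rightarrow> 'a"
  have "linear_subspace (res ` L)"
    using L by (intro linear_subspace_image) (auto simp: linear_code_iff res_def fun_eq_iff)
  moreover have "res ` L \<subseteq> lab A" "res f \<in> lab A"
    by (auto simp: res_def lab_def)
  moreover have "res f \<notin> res ` L"
  proof
    assume "res f \<in> res ` L"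
    then obtain p where p: "p \<in> L" "res f = res p" by blast
    have "f i = p i" if "i < n" "i \<notin> J" for i
      using fun_cong[OF p(2), of i] that by (simp add: res_def A_def)
    then show False using no_agree p(1) by blast
  qed
  ultimately obtain y where y: "y \<in> lab A" "\<forall>u\<in>res ` L. (\<Sum>i\<in>A. u i * y i) = 0"
    "(\<Sum>i\<in>A. res f i * y i) \<noteq> 0"
    using separable_if_notin[of A "res ` L" "res f"] unfolding A_def separable_def by auto
  have dot: "(\<Sum>i<n. x i * y i) = (\<Sum>i\<in>A. res x i * y i)" for x
    using y(1) by (intro sum.mono_neutral_cong_right) (auto simp: A_def res_def lab_def)
  have "y \<in> Vn n" using y(1) by (rule lab_mono) (auto simp: A_def)
  moreover have "\<forall>x\<in>L. (\<Sum>i<n. x i * y i) = 0" using y(2) dot by auto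
  moreover have "(\<Sum>i<n. f i * y i) \<noteq> 0" using y(3) dot by simp
  moreover have "\<forall>i\<in>J. y i = 0" using y(1) by (simp add: A_def lab_def)
  ultimately show ?thesis using that by (simp add: dual_def)
qed

section \<open>Recovering a secret from a set of qudits\<close>

definition recoverable :: "nat \<Rightarrow> nat set \<Rightarrow> nat \<Rightarrow>
    ((nat \<Rightarrow> 'a::{zero,plus}) \<Rightarrow> (nat \<Rightarrow> 'a) \<Rightarrow> complex) \<Rightarrow> bool" where
  "recoverable N J k amp \<longleftrightarrow> (\<exists>Ks. trace_preserving J k Ks \<and>
     (\<forall>phi. \<forall>t\<in>Vn k. \<forall>t'\<in>Vn k.
        apply_channel J Ks (reduced N J (\<lambda>x. \<Sum>s\<in>Vn k. phi s * amp s x)) t t'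
          = phi t * cnj (phi t')))"

lemma authorized_iff_recoverable:
  "authorized n e k f1 G01 G1 GE J \<longleftrightarrow> recoverable (n + e) J k (enc_amp n e k f1 G01 G1 GE)"
  by (simp add: authorized_def recoverable_def encode_def[abs_def])

lemma cnj_of_bool [simp]: "cnj (of_bool P) = of_bool P"
  by (cases P) simp_all

lemma apply_channel_cong:
  assumes "\<And>a a'. a \<in> lab J \<Longrightarrow> a' \<in> lab J \<Longrightarrow> \<rho> a a' = \<rho>' a a'"
  shows "apply_channel J Ks \<rho> t t' = apply_channel J Ks \<rho>' t t'"
  unfolding apply_channel_def using assms
  by (intro arg_cong[where f = sum_list] map_cong sum.cong) auto

lemma apply_channel_reduced:
  "apply_channel J Ks (reduced N J \<psi>) t t' =
    (\<Sum>K\<leftarrow>Ks. \<Sum>b\<in>lab ({0..<N} - J).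
       (\<Sum>a\<in>lab J. K t a * \<psi> (a + b)) * cnj (\<Sum>a\<in>lab J. K t' a * \<psi> (a + b)))"
proof -
  let ?B = "lab ({0..<N} - J)"
  have "(\<Sum>a\<in>lab J. \<Sum>a'\<in>lab J. K t a * reduced N J \<psi> a a' * cnj (K t' a'))
      = (\<Sum>b\<in>?B. (\<Sum>a\<in>lab J. K t a * \<psi> (a + b)) * cnj (\<Sum>a\<in>lab J. K t' a * \<psi> (a + b)))" for K
  proof -
    have "(\<Sum>a\<in>lab J. \<Sum>a'\<in>lab J. K t a * reduced N J \<psi> a a' * cnj (K t' a'))
        = (\<Sum>a\<in>lab J. \<Sum>a'\<in>lab J. \<Sum>b\<in>?B. K t a * (\<psi> (a + b) * cnj (\<psi> (a' + b))) * cnj (K t' a'))"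
      by (simp only: reduced_def vadd_eq sum_distrib_left sum_distrib_right)
    also have "\<dots> = (\<Sum>a\<in>lab J. \<Sum>b\<in>?B. \<Sum>a'\<in>lab J.
        K t a * (\<psi> (a + b) * cnj (\<psi> (a' + b))) * cnj (K t' a'))"
      by (rule sum.cong[OF refl], rule sum.swap)
    also have "\<dots> = (\<Sum>b\<in>?B. \<Sum>a\<in>lab J. \<Sum>a'\<in>lab J.
        K t a * (\<psi> (a + b) * cnj (\<psi> (a' + b))) * cnj (K t' a'))"
      by (rule sum.swap)
    also have "\<dots> = (\<Sum>b\<in>?B. (\<Sum>a\<in>lab J. K t a * \<psi> (a + b)) * cnj (\<Sum>a\<in>lab J. K t' a * \<psi> (a + b)))"
      by (simp only: cnj_sum complex_cnj_mult sum_product) (intro sum.cong refl, simp add: mult_ac)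
    finally show ?thesis .
  qed
  then show ?thesis by (simp add: apply_channel_def)
qed

lemma recoverable_pair:
  fixes amp :: "(nat \<Rightarrow> 'a::{zero,plus,finite}) \<Rightarrow> (nat \<Rightarrow> 'a) \<Rightarrow> complex"
  assumes "recoverable N J k amp" and s: "s \<in> Vn k" "s' \<in> Vn k" "s \<noteq> s'"
  obtains Ks where
    "\<And>\<alpha> \<beta>. apply_channel J Ks (reduced N J (\<lambda>x. \<alpha> * amp s x + \<beta> * amp s' x)) s s = \<alpha> * cnj \<alpha>"
    "\<And>\<alpha> \<beta>. apply_channel J Ks (reduced N J (\<lambda>x. \<alpha> * amp s x + \<beta> * amp s' x)) s s' = \<alpha> * cnj \<beta>"
proof -
  obtain Ks where out: "\<And>phi t t'. t \<in> Vn k \<Longrightarrow> t' \<in> Vn k \<Longrightarrow>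
      apply_channel J Ks (reduced N J (\<lambda>x. \<Sum>v\<in>Vn k. phi v * amp v x)) t t' = phi t * cnj (phi t')"
    using assms(1) unfolding recoverable_def by blast
  define phi where "phi \<alpha> \<beta> v = (if v = s then \<alpha> else if v = s' then \<beta> else (0::complex))" for \<alpha> \<beta> v
  have eq: "(\<lambda>x. \<Sum>v\<in>Vn k. phi \<alpha> \<beta> v * amp v x) = (\<lambda>x. \<alpha> * amp s x + \<beta> * amp s' x)" for \<alpha> \<beta>
  proof
    fix x
    have "(\<Sum>v\<in>Vn k. phi \<alpha> \<beta> v * amp v x)
        = (\<Sum>v\<in>Vn k. (if v = s then \<alpha> * amp s x else 0) + (if v = s' then \<beta> * amp s' x else 0))"
      using s(3) by (intro sum.cong) (auto simp: phi_def)
    then show "(\<Sum>v\<in>Vn k. phi \<alpha> \<beta> v * amp v x) = \<alpha> * amp s x + \<beta> * amp s' x"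
      using s finite_lab[of "{0..<k}", where 'a = 'a] by (simp add: sum.distrib)
  qed
  have at_s: "phi \<alpha> \<beta> s = \<alpha>" "phi \<alpha> \<beta> s' = \<beta>" for \<alpha> \<beta>
    using s(3) by (simp_all add: phi_def)
  show ?thesis
  proof (rule that)
    show "apply_channel J Ks (reduced N J (\<lambda>x. \<alpha> * amp s x + \<beta> * amp s' x)) s s = \<alpha> * cnj \<alpha>"
      for \<alpha> \<beta> using out[of s s "phi \<alpha> \<beta>"] s(1) by (simp only: eq at_s)
    show "apply_channel J Ks (reduced N J (\<lambda>x. \<alpha> * amp s x + \<beta> * amp s' x)) s s' = \<alpha> * cnj \<beta>"
      for \<alpha> \<beta> using out[of s s' "phi \<alpha> \<beta>"] s(1,2) by (simp only: eq at_s)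
  qed
qed

lemma reduced_shift:
  fixes \<psi> :: "(nat \<Rightarrow> 'a::group_add) \<Rightarrow> complex"
  assumes c: "c \<in> lab ({0..<N} - J)"
  shows "reduced N J (\<lambda>x. \<psi> (x + c)) = reduced N J \<psi>"
proof (intro ext)
  fix a a'
  show "reduced N J (\<lambda>x. \<psi> (x + c)) a a' = reduced N J \<psi> a a'"
    unfolding reduced_def vadd_eq
    by (rule sum.reindex_bij_witness[of _ "\<lambda>b. b - c" "\<lambda>b. b + c"])
      (auto simp: add.assoc intro: lab_add lab_diff c)
qed

lemma not_recoverable_if_shift:
  fixes amp :: "(nat \<Rightarrow> 'a::{group_add,finite}) \<Rightarrow> (nat \<Rightarrow> 'a) \<Rightarrow> complex"
  assumes s: "s \<in> Vn k" "s' \<in> Vn k" "s \<noteq> s'" and c: "c \<in> lab ({0..<N} - J)"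
    and shift: "\<And>x. amp s (x + c) = amp s' x"
  shows "\<not> recoverable N J k amp"
proof
  assume "recoverable N J k amp"
  then obtain Ks where out: "\<And>\<alpha> \<beta>.
      apply_channel J Ks (reduced N J (\<lambda>x. \<alpha> * amp s x + \<beta> * amp s' x)) s s = \<alpha> * cnj \<alpha>"
    using recoverable_pair[OF _ s] by metis
  have "reduced N J (amp s) = reduced N J (amp s')"
    using reduced_shift[OF c, of "amp s"] shift by simp
  then show False
    using out[of 1 0] out[of 0 1] by simp
qed

lemma reduced_sum_eq_reduced_diff:
  assumes orth: "\<And>x x'. (\<forall>i. i \<notin> J \<longrightarrow> x i = x' i) \<Longrightarrow> \<psi> x * \<phi> x' = 0"
    and a: "a \<in> lab J" "a' \<in> lab J"
  shows "reduced N J (\<lambda>x. \<psi> x + \<phi> x) a a' = reduced N J (\<lambda>x. \<psi> x - \<phi> x) a a'"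
  unfolding reduced_def vadd_eq
proof (rule sum.cong[OF refl])
  fix b
  have "\<forall>i. i \<notin> J \<longrightarrow> (a + b) i = (a' + b) i" "\<forall>i. i \<notin> J \<longrightarrow> (a' + b) i = (a + b) i"
    using a by (simp_all add: lab_def)
  then have "\<psi> (a + b) * \<phi> (a' + b) = 0" "\<psi> (a' + b) * \<phi> (a + b) = 0"
    by (simp_all only: orth)
  then have "\<psi> (a + b) * cnj (\<phi> (a' + b)) = 0" "\<phi> (a + b) * cnj (\<psi> (a' + b)) = 0"
    by auto
  moreover have "(\<psi> (a + b) + \<phi> (a + b)) * cnj (\<psi> (a' + b) + \<phi> (a' + b))
      = (\<psi> (a + b) - \<phi> (a + b)) * cnj (\<psi> (a' + b) - \<phi> (a' + b))
        + 2 * (\<psi> (a + b) * cnj (\<phi> (a' + b))) + 2 * (\<phi> (a + b) * cnj (\<psi> (a' + b)))"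
    by (simp add: algebra_simps)
  ultimately show "(\<psi> (a + b) + \<phi> (a + b)) * cnj (\<psi> (a' + b) + \<phi> (a' + b))
    = (\<psi> (a + b) - \<phi> (a + b)) * cnj (\<psi> (a' + b) - \<phi> (a' + b))"
    by (simp only: mult_zero_right add_0_right)
qed

lemma not_recoverable_if_environment_distinguishes:
  fixes amp :: "(nat \<Rightarrow> 'a::{zero,plus,finite}) \<Rightarrow> (nat \<Rightarrow> 'a) \<Rightarrow> complex"
  assumes s: "s \<in> Vn k" "s' \<in> Vn k" "s \<noteq> s'"
    and orth: "\<And>x x'. (\<forall>i. i \<notin> J \<longrightarrow> x i = x' i) \<Longrightarrow> amp s x * amp s' x' = 0"
  shows "\<not> recoverable N J k amp"
proof
  assume "recoverable N J k amp"
  then obtain Ks where out: "\<And>\<alpha> \<beta>.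
      apply_channel J Ks (reduced N J (\<lambda>x. \<alpha> * amp s x + \<beta> * amp s' x)) s s' = \<alpha> * cnj \<beta>"
    using recoverable_pair[OF _ s] by metis
  have "apply_channel J Ks (reduced N J (\<lambda>x. amp s x + amp s' x)) s s'
      = apply_channel J Ks (reduced N J (\<lambda>x. amp s x - amp s' x)) s s'"
    by (rule apply_channel_cong) (rule reduced_sum_eq_reduced_diff[OF orth])
  then show False
    using out[of 1 1] out[of 1 "- 1"] by simp
qed

(* Indexed by a list ms enumerating the labels on J: the Kraus operators |t><w t + m| for m in M
   read the secret off the J-part of a label, and the operators |0><a| for the labels a not of
   this form make the channel trace preserving. *)
definition decode_kraus :: "nat \<Rightarrow> ((nat \<Rightarrow> 'a) \<Rightarrow> nat \<Rightarrow> 'a) \<Rightarrow> (nat \<Rightarrow> 'a) set \<Rightarrow>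
    (nat \<Rightarrow> 'a::{zero,plus}) \<Rightarrow> (nat \<Rightarrow> 'a) \<Rightarrow> (nat \<Rightarrow> 'a) \<Rightarrow> complex" where
  "decode_kraus k w M m t a = of_bool (t \<in> Vn k \<and> m \<in> M \<and> a = w t + m)"

definition discard_kraus :: "nat \<Rightarrow> ((nat \<Rightarrow> 'a) \<Rightarrow> nat \<Rightarrow> 'a) \<Rightarrow> (nat \<Rightarrow> 'a) set \<Rightarrow>
    (nat \<Rightarrow> 'a::{zero,plus}) \<Rightarrow> (nat \<Rightarrow> 'a) \<Rightarrow> (nat \<Rightarrow> 'a) \<Rightarrow> complex" where
  "discard_kraus k w M m t a = of_bool (t = 0 \<and> a = m \<and> (\<forall>u\<in>Vn k. \<forall>m'\<in>M. a \<noteq> w u + m'))"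

definition decoder :: "nat \<Rightarrow> ((nat \<Rightarrow> 'a) \<Rightarrow> nat \<Rightarrow> 'a) \<Rightarrow> (nat \<Rightarrow> 'a) set \<Rightarrow>
    (nat \<Rightarrow> 'a::{zero,plus}) list \<Rightarrow>
    ((nat \<Rightarrow> 'a) \<Rightarrow> (nat \<Rightarrow> 'a) \<Rightarrow> complex) list" where
  "decoder k w M ms = map (decode_kraus k w M) ms @ map (discard_kraus k w M) ms"

lemma sum_list_decoder:
  "distinct ms \<Longrightarrow> (\<Sum>K\<leftarrow>decoder k w M ms. f K)
    = (\<Sum>m\<in>set ms. f (decode_kraus k w M m)) + (\<Sum>m\<in>set ms. f (discard_kraus k w M m))"
  by (simp add: decoder_def sum_list_distinct_conv_sum_set)

lemma trace_preserving_decoder: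
  fixes w :: "(nat \<Rightarrow> 'a::{ab_group_add,finite}) \<Rightarrow> nat \<Rightarrow> 'a"
  assumes ms: "set ms = lab J" "distinct ms" and M: "M \<subseteq> lab J"
    and inj: "\<And>t t' m m'. t \<in> Vn k \<Longrightarrow> t' \<in> Vn k \<Longrightarrow> m \<in> M \<Longrightarrow> m' \<in> M \<Longrightarrow>
      w t + m = w t' + m' \<Longrightarrow> t = t'"
  shows "trace_preserving J k (decoder k w M ms)"
  unfolding trace_preserving_def
proof (intro ballI)
  fix a a' :: "nat \<Rightarrow> 'a" assume a: "a \<in> lab J" "a' \<in> lab J"
  have fin: "finite (lab J :: (nat \<Rightarrow> 'a) set)" "finite (Vn k :: (nat \<Rightarrow> 'a) set)"
    using ms(1) finite_lab[of "{0..<k}"] by (metis List.finite_set, simp)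
  define T where "T \<longleftrightarrow> (\<exists>u\<in>Vn k. \<exists>m\<in>M. a = w u + m)"
  have decode: "(\<Sum>m\<in>lab J. \<Sum>t\<in>Vn k. cnj (decode_kraus k w M m t a) * decode_kraus k w M m t a')
      = of_bool (a = a' \<and> T)"
  proof (cases T)
    case True
    then obtain t0 m0 where tm: "t0 \<in> Vn k" "m0 \<in> M" "a = w t0 + m0" unfolding T_def by blast
    have "t \<in> Vn k \<and> m \<in> M \<and> a = w t + m \<longleftrightarrow> m = m0 \<and> t = t0" for m t
      using inj[of t t0 m m0] tm by auto
    then have "cnj (decode_kraus k w M m t a) * decode_kraus k w M m t a'
        = (if t = t0 then if m = m0 then of_bool (a = a') else 0 else 0)" for m t
      by (auto simp: decode_kraus_def)
    then show ?thesis using tm M fin True by auto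
  next
    case False
    then have "decode_kraus k w M m t a = 0" for m t by (auto simp: decode_kraus_def T_def)
    then show ?thesis using False by simp
  qed
  have "cnj (discard_kraus k w M m t a) * discard_kraus k w M m t a'
      = (if t = 0 then if m = a then of_bool (a = a' \<and> \<not> T) else 0 else 0)" for m t
    by (auto simp: discard_kraus_def T_def)
  then have discard: "(\<Sum>m\<in>lab J. \<Sum>t\<in>Vn k.
        cnj (discard_kraus k w M m t a) * discard_kraus k w M m t a')
      = of_bool (a = a' \<and> \<not> T)"
    using a fin by simp
  show "(\<Sum>K\<leftarrow>decoder k w M ms. \<Sum>t\<in>Vn k. cnj (K t a) * K t a') = (if a = a' then 1 else 0)"
    using decode discard ms by (cases T) (simp_all add: sum_list_decoder)
qed

lemma apply_decoder:
  fixes \<psi> :: "(nat \<Rightarrow> 'a::{ab_group_add,finite}) \<Rightarrow> complex"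
  assumes ms: "set ms = lab J" "distinct ms" and M: "M \<subseteq> lab J"
    and w: "\<And>t. t \<in> Vn k \<Longrightarrow> w t \<in> lab J"
    and t: "t \<in> Vn k" "t' \<in> Vn k"
    and vanish: "\<And>a b. a \<in> lab J \<Longrightarrow> \<forall>u\<in>Vn k. \<forall>m\<in>M. a \<noteq> w u + m \<Longrightarrow>
      b \<in> lab ({0..<N} - J) \<Longrightarrow> \<psi> (a + b) = 0"
  shows "apply_channel J (decoder k w M ms) (reduced N J \<psi>) t t'
    = (\<Sum>m\<in>M. \<Sum>b\<in>lab ({0..<N} - J). \<psi> (w t + m + b) * cnj (\<psi> (w t' + m + b)))"
proof -
  let ?B = "lab ({0..<N} - J)"
  have fin: "finite (lab J :: (nat \<Rightarrow> 'a) set)"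
    using ms(1) by (metis List.finite_set)
  have decode: "(\<Sum>a\<in>lab J. decode_kraus k w M m u a * \<psi> (a + b))
      = (if m \<in> M then \<psi> (w u + m + b) else 0)" if "u \<in> Vn k" "m \<in> lab J" for m u b
  proof -
    have "w u + m \<in> lab J" using w[OF that(1)] that(2) by (rule lab_add)
    moreover have "decode_kraus k w M m u a * \<psi> (a + b)
        = (if a = w u + m then (if m \<in> M then \<psi> (w u + m + b) else 0) else 0)" for a
      using that(1) by (simp add: decode_kraus_def)
    ultimately show ?thesis using fin by simp
  qed
  have discard: "(\<Sum>a\<in>lab J. discard_kraus k w M m u a * \<psi> (a + b)) = 0" if "b \<in> ?B" for m u b
  proof (intro sum.neutral ballI)
    fix a :: "nat \<Rightarrow> 'a" assume "a \<in> lab J"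
    then show "discard_kraus k w M m u a * \<psi> (a + b) = 0"
      using vanish[of a b] that
      by (cases "\<forall>u\<in>Vn k. \<forall>m'\<in>M. a \<noteq> w u + m'") (simp_all add: discard_kraus_def)
  qed
  have "apply_channel J (decoder k w M ms) (reduced N J \<psi>) t t'
      = (\<Sum>m\<in>lab J. \<Sum>b\<in>?B. (\<Sum>a\<in>lab J. decode_kraus k w M m t a * \<psi> (a + b))
           * cnj (\<Sum>a\<in>lab J. decode_kraus k w M m t' a * \<psi> (a + b)))
        + (\<Sum>m\<in>lab J. \<Sum>b\<in>?B. (\<Sum>a\<in>lab J. discard_kraus k w M m t a * \<psi> (a + b))
           * cnj (\<Sum>a\<in>lab J. discard_kraus k w M m t' a * \<psi> (a + b)))"
    by (simp only: apply_channel_reduced sum_list_decoder[OF ms(2)] ms(1))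
  also have "\<dots> = (\<Sum>m\<in>lab J. \<Sum>b\<in>?B.
      (if m \<in> M then \<psi> (w t + m + b) else 0) * cnj (if m \<in> M then \<psi> (w t' + m + b) else 0))"
    using t by (simp add: decode discard del: cnj_sum)
  also have "\<dots> = (\<Sum>m\<in>lab J.
      if m \<in> M then \<Sum>b\<in>?B. \<psi> (w t + m + b) * cnj (\<psi> (w t' + m + b)) else 0)"
    by (intro sum.cong refl) auto
  also have "\<dots> = (\<Sum>m\<in>M. \<Sum>b\<in>?B. \<psi> (w t + m + b) * cnj (\<psi> (w t' + m + b)))"
    using fin M by (simp add: sum.inter_restrict[symmetric] Int_absorb1)
  finally show ?thesis .
qed

lemma sum_lab_split_of_bool:
  fixes C :: "(nat \<Rightarrow> 'a::{monoid_add,finite}) set"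
  assumes "J \<subseteq> X" "finite X" "C \<subseteq> lab X"
  shows "(\<Sum>a\<in>lab J. \<Sum>b\<in>lab (X - J). of_bool (a + b \<in> C)) = (of_nat (card C) :: 'b::semiring_1)"
proof -
  let ?D = "lab J \<times> lab (X - J) :: ((nat \<Rightarrow> 'a) \<times> (nat \<Rightarrow> 'a)) set"
  let ?f = "\<lambda>(a, b). a + b"
  have bij: "bij_betw ?f ?D (lab X)" using assms(1) by (rule bij_betw_lab_split)
  have "inj_on ?f (?D \<inter> {p. ?f p \<in> C})"
    using bij by (auto simp: bij_betw_def intro: inj_on_subset)
  moreover have "?f ` (?D \<inter> {p. ?f p \<in> C}) = C"
  proof
    show "C \<subseteq> ?f ` (?D \<inter> {p. ?f p \<in> C})"
    proof
      fix x assume "x \<in> C"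
      then have "x \<in> ?f ` ?D"
        using bij assms(3) by (auto simp: bij_betw_def)
      then obtain p where "p \<in> ?D" "x = ?f p" by blast
      then show "x \<in> ?f ` (?D \<inter> {p. ?f p \<in> C})" using \<open>x \<in> C\<close> by blast
    qed
  qed auto
  ultimately have "card (?D \<inter> {p. ?f p \<in> C}) = card C"
    by (metis card_image)
  moreover have "finite ?D"
    using assms(1,2) finite_subset by (metis finite_Diff finite_SigmaI finite_lab)
  ultimately show ?thesis
    by (simp add: sum.cartesian_product case_prod_beta')
qed

locale decodable_encoding =
  fixes N :: nat and J :: "nat set" and k :: nat
    and C :: "(nat \<Rightarrow> 'a::{ab_group_add,finite}) set"
    and w :: "(nat \<Rightarrow> 'a) \<Rightarrow> nat \<Rightarrow> 'a"
    and \<gamma> :: complex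
    and amp :: "(nat \<Rightarrow> 'a) \<Rightarrow> (nat \<Rightarrow> 'a) \<Rightarrow> complex"
  assumes J_subset: "J \<subseteq> {0..<N}" and C_subset: "C \<subseteq> lab {0..<N}"
    and shift_lab: "\<And>t. t \<in> Vn k \<Longrightarrow> w t \<in> lab J"
    and amp_eq: "\<And>t x. t \<in> Vn k \<Longrightarrow> amp t x = (if x - w t \<in> C then \<gamma> else 0)"
    and decodable: "\<And>t t' c c'. t \<in> Vn k \<Longrightarrow> t' \<in> Vn k \<Longrightarrow> c \<in> C \<Longrightarrow> c' \<in> C \<Longrightarrow>
      (\<forall>i\<in>J. w t i + c i = w t' i + c' i) \<Longrightarrow> t = t'"
    and normalized: "\<gamma> * cnj \<gamma> * of_nat (card C) = 1"
begin

abbreviation B :: "nat set" where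
  "B \<equiv> {0..<N} - J"

definition J_parts :: "(nat \<Rightarrow> 'a) set" where
  "J_parts = {m \<in> lab J. \<exists>b\<in>lab B. m + b \<in> C}"

lemma J_parts_lab: "J_parts \<subseteq> lab J"
  by (auto simp: J_parts_def)

lemma decodable_J_parts:
  assumes t: "t \<in> Vn k" "t' \<in> Vn k" and m: "m \<in> J_parts" "m' \<in> J_parts"
    and eq: "w t + m = w t' + m'"
  shows "t = t'"
proof -
  obtain b b' where b: "b \<in> lab B" "b' \<in> lab B" "m + b \<in> C" "m' + b' \<in> C"
    using m by (auto simp: J_parts_def)
  have "w t i + (m + b) i = w t' i + (m' + b') i" if "i \<in> J" for i
    using fun_cong[OF eq, of i] b(1,2) that by (simp add: lab_def)
  then show ?thesis using decodable[OF t b(3,4)] by blast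
qed

lemma superposition_vanishes:
  assumes a: "a \<in> lab J" "\<forall>u\<in>Vn k. \<forall>m\<in>J_parts. a \<noteq> w u + m" and b: "b \<in> lab B"
  shows "(\<Sum>s\<in>Vn k. phi s * amp s (a + b)) = 0"
proof -
  have "a + b - w s \<notin> C" if s: "s \<in> Vn k" for s
  proof
    assume "a + b - w s \<in> C"
    then have "a - w s \<in> J_parts"
      using a(1) shift_lab[OF s] b unfolding J_parts_def
      by (auto intro: lab_diff simp: algebra_simps)
    then show False using a(2) s by force
  qed
  then show ?thesis by (simp add: amp_eq)
qed

lemma superposition_decoded:
  assumes u: "u \<in> Vn k" and m: "m \<in> J_parts" and b: "b \<in> lab B"
  shows "(\<Sum>s\<in>Vn k. phi s * amp s (w u + m + b)) = phi u * (if m + b \<in> C then \<gamma> else 0)"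
proof -
  have "phi s * amp s (w u + m + b) = (if s = u then phi u * (if m + b \<in> C then \<gamma> else 0) else 0)"
    if s: "s \<in> Vn k" for s
  proof (cases "s = u")
    case True then show ?thesis using s by (simp add: amp_eq algebra_simps)
  next
    case False
    have "w u + m + b - w s \<notin> C"
    proof
      assume "w u + m + b - w s \<in> C"
      then have m': "w u + m - w s \<in> J_parts"
        using m b shift_lab[OF u] shift_lab[OF s] unfolding J_parts_def
        by (auto intro!: lab_add lab_diff simp: algebra_simps)
      show False using decodable_J_parts[OF s u m' m] False by (simp add: algebra_simps)
    qed
    then show ?thesis using False s by (simp add: amp_eq)
  qed
  then show ?thesis using u by (simp add: finite_lab)
qed

lemma card_J_parts_split:
  "(\<Sum>m\<in>J_parts. \<Sum>b\<in>lab B. of_bool (m + b \<in> C)) = (of_nat (card C) :: complex)"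
proof -
  have "finite (lab J :: (nat \<Rightarrow> 'a) set)"
    using J_subset by (intro finite_lab) (rule finite_subset, auto)
  then have "(\<Sum>m\<in>J_parts. \<Sum>b\<in>lab B. of_bool (m + b \<in> C))
      = (\<Sum>m\<in>lab J. \<Sum>b\<in>lab B. (of_bool (m + b \<in> C) :: complex))"
    by (intro sum.mono_neutral_left) (auto simp: J_parts_def)
  also have "\<dots> = of_nat (card C)"
    using J_subset C_subset by (intro sum_lab_split_of_bool) auto
  finally show ?thesis .
qed

theorem recoverable: "recoverable N J k amp"
proof -
  have "finite (lab J :: (nat \<Rightarrow> 'a) set)"
    using J_subset by (intro finite_lab) (rule finite_subset, auto)
  then obtain ms :: "(nat \<Rightarrow> 'a) list" where ms: "set ms = lab J" "distinct ms"
    using finite_distinct_list by blast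
  have "trace_preserving J k (decoder k w J_parts ms)"
    by (rule trace_preserving_decoder[OF ms J_parts_lab]) (rule decodable_J_parts)
  moreover have "apply_channel J (decoder k w J_parts ms)
      (reduced N J (\<lambda>x. \<Sum>s\<in>Vn k. phi s * amp s x)) t t' = phi t * cnj (phi t')"
    if t: "t \<in> Vn k" "t' \<in> Vn k" for phi t t'
  proof -
    have "apply_channel J (decoder k w J_parts ms) (reduced N J (\<lambda>x. \<Sum>s\<in>Vn k. phi s * amp s x)) t t'
        = (\<Sum>m\<in>J_parts. \<Sum>b\<in>lab B.
             phi t * (if m + b \<in> C then \<gamma> else 0)
             * (cnj (phi t') * cnj (if m + b \<in> C then \<gamma> else 0)))"
      by (simp add: apply_decoder[OF ms J_parts_lab shift_lab t] superposition_vanishes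
          superposition_decoded t cong: sum.cong)
    also have "\<dots> = (\<Sum>m\<in>J_parts. \<Sum>b\<in>lab B. phi t * cnj (phi t') * (\<gamma> * cnj \<gamma>) * of_bool (m + b \<in> C))"
      by (intro sum.cong refl) simp
    also have "\<dots> = phi t * cnj (phi t')"
      using normalized by (simp add: sum_distrib_left[symmetric] card_J_parts_split mult_ac)
    finally show ?thesis .
  qed
  ultimately show ?thesis
    unfolding recoverable_def by blast
qed

end

section \<open>The extended CSS scheme\<close>

lemma ext_vec_add: "ext_vec n (c + c') (r + r') = ext_vec n c r + ext_vec n c' r'"
  by (simp add: ext_vec_def fun_eq_iff)

lemma ext_vec_diff: "ext_vec n (c - c') (r - r') = ext_vec n c r - ext_vec n c' r'"
  by (simp add: ext_vec_def fun_eq_iff)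

lemma ext_vec_zero: "c \<in> Vn n \<Longrightarrow> ext_vec n c 0 = c"
  by (auto simp: ext_vec_def lab_def fun_eq_iff)

lemma ext_vec_shift: "c \<in> Vn n \<Longrightarrow> ext_vec n (c + v) r = c + ext_vec n v r"
  for c :: "nat \<Rightarrow> 'a::monoid_add"
  by (auto simp: ext_vec_def lab_def fun_eq_iff)

lemma ext_vec_in_lab: "r \<in> Vn e \<Longrightarrow> ext_vec n c r \<in> lab {0..<n + e}"
  by (auto simp: ext_vec_def lab_def)

lemma ext_vec_inj:
  assumes "ext_vec n c r = ext_vec n c' r'" "c \<in> Vn n" "c' \<in> Vn n"
  shows "c = c'" "r = r'"
proof -
  show "c = c'"
  proof
    fix i show "c i = c' i"
      using fun_cong[OF assms(1), of i] assms(2,3)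
      by (cases "i < n") (auto simp: ext_vec_def lab_def)
  qed
  show "r = r'"
  proof
    fix j show "r j = r' j"
      using fun_cong[OF assms(1), of "n + j"] by (simp add: ext_vec_def)
  qed
qed

lemma card_fiber_inj_on:
  assumes "inj_on f A"
  shows "card {a \<in> A. f a = y} = (if y \<in> f ` A then 1 else 0)"
proof (cases "y \<in> f ` A")
  case True
  then obtain a where "a \<in> A" "y = f a" by blast
  then have "{a' \<in> A. f a' = y} = {a}" using assms by (auto dest: inj_onD)
  then show ?thesis using True by simp
next
  case False
  then have "{a' \<in> A. f a' = y} = {}" by auto
  then show ?thesis using False by (simp only: card.empty if_False)
qed

locale ecss =
  fixes n e k f1 :: nat
    and F0 F1 :: "(nat \<Rightarrow> 'a::{field,finite}) set"
    and G01 G1 GE :: "nat \<Rightarrow> nat \<Rightarrow> 'a"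
  assumes code0: "linear_code n F0" and code1: "linear_code n F1" and sub: "F1 \<subset> F0"
    and gen1: "generator_matrix G1 f1 n F1"
    and gen0: "generator_matrix (stack G01 k G1) (k + f1) n F0"
    and matE: "is_matrix GE e n"
    and cap: "F0 \<inter> rowspace GE e = {zerov}"
begin

abbreviation g :: "(nat \<Rightarrow> 'a) \<Rightarrow> nat \<Rightarrow> 'a" where
  "g s \<equiv> comb G01 k s"

abbreviation E :: "(nat \<Rightarrow> 'a) set" where
  "E \<equiv> rowspace GE e"

lemma subspace_F0: "linear_subspace F0" and subspace_F1: "linear_subspace F1"
  and F0_Vn: "F0 \<subseteq> Vn n" and F1_Vn: "F1 \<subseteq> Vn n"
  using code0 code1 by (simp_all add: linear_code_iff)

lemma E_Vn: "E \<subseteq> Vn n"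
  using comb_in_Vn[OF matE] by (auto simp: rowspace_def)

lemma F1_eq_image: "F1 = comb G1 f1 ` Vn f1"
  using gen1 by (simp add: generator_matrix_def rowspace_eq_image)

lemma g_Vn: "g s \<in> Vn n"
proof -
  have "G01 j i = 0" if "j < k" "n \<le> i" for j i
  proof -
    have "stack G01 k G1 j i = 0"
      using gen0 that(2) by (simp add: generator_matrix_def is_matrix_def)
    then show ?thesis using that(1) by (simp add: stack_def)
  qed
  then show ?thesis by (simp add: lab_def comb_def)
qed

lemma F0_eq: "F0 = {g s + p | s p. s \<in> Vn k \<and> p \<in> F1}"
proof -
  have F0: "F0 = rowspace (stack G01 k G1) (k + f1)"
    using gen0 by (simp add: generator_matrix_def)
  show ?thesis
  proof
    show "F0 \<subseteq> {g s + p | s p. s \<in> Vn k \<and> p \<in> F1}"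
    proof
      fix x assume "x \<in> F0"
      then obtain r where "x = comb (stack G01 k G1) (k + f1) r"
        by (auto simp: F0 rowspace_def)
      then have "x = g (\<lambda>j. if j < k then r j else 0) + comb G1 f1 (\<lambda>j. r (k + j))"
        by (simp add: comb_stack comb_truncate)
      moreover have "(\<lambda>j. if j < k then r j else 0) \<in> Vn k" "comb G1 f1 (\<lambda>j. r (k + j)) \<in> F1"
        using gen1 by (auto simp: lab_def generator_matrix_def rowspace_def)
      ultimately show "x \<in> {g s + p | s p. s \<in> Vn k \<and> p \<in> F1}" by blast
    qed
  next
    show "{g s + p | s p. s \<in> Vn k \<and> p \<in> F1} \<subseteq> F0"
    proof clarify
      fix s p :: "nat \<Rightarrow> 'a" assume "s \<in> Vn k" "p \<in> F1"
      then obtain r where "p = comb G1 f1 r" by (auto simp: F1_eq_image)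
      then have "g s + p = comb (stack G01 k G1) (k + f1) (\<lambda>j. if j < k then s j else r (j - k))"
        by (simp add: comb_stack) (simp add: comb_def)
      then show "g s + p \<in> F0" by (auto simp: F0 rowspace_def)
    qed
  qed
qed

lemma subspace_E: "linear_subspace E"
  by (rule linear_subspace_rowspace)

lemma comb_in_E: "comb GE e r \<in> E"
  by (auto simp: rowspace_def)

lemma g_in_F0:
  assumes "s \<in> Vn k"
  shows "g s \<in> F0"
proof -
  have "g s + 0 \<in> {g s + p | s p. s \<in> Vn k \<and> p \<in> F1}"
    using assms linear_subspace_zero[OF subspace_F1] by blast
  then show ?thesis by (simp add: F0_eq)
qed

lemma eq_0_if_g_in_F1_plus_E:
  assumes s: "s \<in> Vn k" and gs: "g s \<in> code_sum F1 E"
  shows "s = 0"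
proof -
  obtain p x where px: "p \<in> F1" "x \<in> E" "g s = p + x"
    using gs by (auto simp: code_sum_eq)
  have "g s - p \<in> F0"
    using subspace_F0 g_in_F0[OF s] px(1) sub by (blast intro: linear_subspace_diff)
  then have "g s = p"
    using px cap by auto
  then obtain r where "g s = comb G1 f1 r"
    using px(1) by (auto simp: F1_eq_image)
  moreover have "comb (stack G01 k G1) (k + f1) (\<lambda>j. if j < k then s j else - r (j - k))
      = g s - comb G1 f1 r"
    by (simp add: comb_stack) (simp add: comb_def sum_negf fun_eq_iff)
  ultimately have "comb (stack G01 k G1) (k + f1) (\<lambda>j. if j < k then s j else - r (j - k)) = zerov"
    by simp
  moreover have "rows_independent (stack G01 k G1) (k + f1)"
    using gen0 by (simp add: generator_matrix_def)
  ultimately have "(if j < k then s j else - r (j - k)) = 0" if "j < k + f1" for j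
    using that unfolding rows_independent_def by blast
  then have "s j = 0" if "j < k" for j
    using that by (metis trans_less_add1)
  then show ?thesis using s by (auto simp: lab_def fun_eq_iff)
qed

(* The code C_1 of the scheme, generated by [G_F1 0; G_E I_e]; by enc_amp_eq the encoding of |s>
   is the uniform superposition of the labels g s + C1. *)
definition C1 :: "(nat \<Rightarrow> 'a) set" where
  "C1 = {ext_vec n (p + comb GE e r) r | p r. p \<in> F1 \<and> r \<in> Vn e}"

definition amplitude :: complex where
  "amplitude = 1 / complex_of_real (sqrt (real (card (UNIV :: 'a set) ^ (f1 + e))))"

lemma C1_lab: "C1 \<subseteq> lab {0..<n + e}"
  by (auto simp: C1_def intro: ext_vec_in_lab)

lemma C1_add:
  assumes "c \<in> C1" "c' \<in> C1"
  shows "c + c' \<in> C1"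
proof -
  obtain p r p' r' where "p \<in> F1" "r \<in> Vn e" "c = ext_vec n (p + comb GE e r) r"
    "p' \<in> F1" "r' \<in> Vn e" "c' = ext_vec n (p' + comb GE e r') r'"
    using assms by (auto simp: C1_def)
  moreover have "ext_vec n (p + comb GE e r) r + ext_vec n (p' + comb GE e r') r'
      = ext_vec n ((p + p') + comb GE e (r + r')) (r + r')"
    by (simp add: ext_vec_add[symmetric] comb_add algebra_simps)
  ultimately show ?thesis
    using linear_subspace_add[OF subspace_F1] by (auto simp: C1_def intro: lab_add)
qed

lemma C1_diff:
  assumes "c \<in> C1" "c' \<in> C1"
  shows "c - c' \<in> C1"
proof -
  obtain p r p' r' where "p \<in> F1" "r \<in> Vn e" "c = ext_vec n (p + comb GE e r) r"
    "p' \<in> F1" "r' \<in> Vn e" "c' = ext_vec n (p' + comb GE e r') r'"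
    using assms by (auto simp: C1_def)
  moreover have "ext_vec n (p + comb GE e r) r - ext_vec n (p' + comb GE e r') r'
      = ext_vec n ((p - p') + comb GE e (r - r')) (r - r')"
    by (simp add: ext_vec_diff[symmetric] comb_diff algebra_simps)
  ultimately show ?thesis
    using linear_subspace_diff[OF subspace_F1] by (auto simp: C1_def intro: lab_diff)
qed

lemma F1_subset_C1: "F1 \<subseteq> C1"
proof
  fix p assume "p \<in> F1"
  then have "p = ext_vec n (p + comb GE e 0) 0"
    using F1_Vn by (auto simp: ext_vec_zero)
  then show "p \<in> C1"
    using \<open>p \<in> F1\<close> lab_zero unfolding C1_def by blast
qed

lemma C1_eq_image: "C1 = (\<lambda>(r1, r2). ext_vec n (comb G1 f1 r1 + comb GE e r2) r2) ` (Vn f1 \<times> Vn e)"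
  unfolding C1_def by (subst F1_eq_image) auto

lemma inj_on_C1_param:
  "inj_on (\<lambda>(r1, r2). ext_vec n (comb G1 f1 r1 + comb GE e r2) r2) (Vn f1 \<times> Vn e)"
proof (rule inj_onI, clarify)
  fix r1 r2 r1' r2' :: "nat \<Rightarrow> 'a"
  assume r: "r1 \<in> Vn f1" "r2 \<in> Vn e" "r1' \<in> Vn f1" "r2' \<in> Vn e"
    and eq: "ext_vec n (comb G1 f1 r1 + comb GE e r2) r2
      = ext_vec n (comb G1 f1 r1' + comb GE e r2') r2'"
  have Vn: "comb G1 f1 x + comb GE e y \<in> Vn n" for x y
    using gen1 matE by (intro lab_add comb_in_Vn) (auto simp: generator_matrix_def)
  have "r2 = r2'" using ext_vec_inj(2)[OF eq Vn Vn] .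
  moreover from this have "comb G1 f1 r1 = comb G1 f1 r1'"
    using ext_vec_inj(1)[OF eq Vn Vn] by simp
  then have "r1 = r1'"
    using inj_on_comb gen1 r by (auto simp: generator_matrix_def dest: inj_onD)
  ultimately show "r1 = r1' \<and> r2 = r2'" by simp
qed

lemma card_C1: "card C1 = card (UNIV :: 'a set) ^ (f1 + e)"
  by (simp add: C1_eq_image card_image[OF inj_on_C1_param] card_cartesian_product card_lab
      power_add)

lemma amplitude_norm: "amplitude * cnj amplitude * of_nat (card C1) = 1"
proof -
  define Q where "Q = real (card (UNIV :: 'a set) ^ (f1 + e))"
  have "Q > 0" by (simp add: Q_def finite_UNIV_card_ge_0)
  then have "amplitude * cnj amplitude = 1 / complex_of_real Q"
    by (simp add: amplitude_def Q_def flip: of_real_mult)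
  moreover have "of_nat (card C1) = complex_of_real Q"
    by (simp add: card_C1 Q_def)
  ultimately show ?thesis using \<open>Q > 0\<close> by simp
qed

lemma enc_amp_eq:
  assumes s: "s \<in> Vn k"
  shows "enc_amp n e k f1 G01 G1 GE s x = (if x - g s \<in> C1 then amplitude else 0)"
proof -
  let ?h = "\<lambda>(r1, r2). ext_vec n (comb G1 f1 r1 + comb GE e r2) r2"
  have "{(r1, r2). r1 \<in> Vn f1 \<and> r2 \<in> Vn e \<and>
      x = ext_vec n (vadd (vadd (g s) (comb G1 f1 r1)) (comb GE e r2)) r2}
      = {r \<in> Vn f1 \<times> Vn e. ?h r = x - g s}"
    using ext_vec_shift[OF g_Vn] by (auto simp: add.assoc)
  then show ?thesis
    by (simp add: enc_amp_def amplitude_def card_fiber_inj_on[OF inj_on_C1_param] C1_eq_image)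
qed

lemma not_authorized_if_code_sum_diff_vanishes:
  assumes J: "J \<subseteq> {0..<n}"
    and x: "x \<in> code_sum F0 E - code_sum F1 E" "\<forall>i\<in>J. x i = 0"
  shows "\<not> authorized n e k f1 G01 G1 GE J"
proof -
  obtain f r where fr: "f \<in> F0" "r \<in> Vn e" "x = f + comb GE e r"
    using x(1) by (auto simp: code_sum_eq rowspace_eq_image)
  then obtain s p where sp: "s \<in> Vn k" "p \<in> F1" "x = g s + (p + comb GE e r)"
    by (auto simp: F0_eq add.assoc)
  have "s \<noteq> 0"
  proof
    assume "s = 0"
    then have "x = p + comb GE e r" using sp(3) by simp
    then show False using x(1) sp(2) by (auto simp: code_sum_eq rowspace_def)
  qed
  define c where "c = ext_vec n x r"
  have c: "c \<in> lab ({0..<n + e} - J)"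
    using J x(2) fr(2) by (auto simp: c_def ext_vec_def lab_def)
  have "c - g s \<in> C1"
    using sp fr(2) by (auto simp: c_def C1_def ext_vec_shift[OF g_Vn])
  then have "z + c - g s \<in> C1 \<longleftrightarrow> z \<in> C1" for z
    using C1_add[of z "c - g s"] C1_diff[of "z + c - g s" "c - g s"] by (auto simp: algebra_simps)
  then have "enc_amp n e k f1 G01 G1 GE s (z + c) = enc_amp n e k f1 G01 G1 GE 0 z" for z
    using sp(1) by (simp add: enc_amp_eq)
  then show ?thesis
    using not_recoverable_if_shift[OF sp(1) lab_zero \<open>s \<noteq> 0\<close> c]
    by (simp add: authorized_iff_recoverable)
qed

(* What the qudits outside J can compute when J \<subseteq> [n]: they hold all extension qudits,
   hence r, and can strip G_E^T r from the first n coordinates. *)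
definition syndrome :: "(nat \<Rightarrow> 'a) \<Rightarrow> (nat \<Rightarrow> 'a) \<Rightarrow> 'a" where
  "syndrome y x = (\<Sum>i<n. (x i - comb GE e (\<lambda>j. x (n + j)) i) * y i)"

lemma syndrome_coset:
  assumes "c \<in> C1" "y \<in> dual n F1"
  shows "syndrome y (g s + c) = (\<Sum>i<n. g s i * y i)"
proof -
  obtain p r where pr: "p \<in> F1" "r \<in> Vn e" "c = ext_vec n (p + comb GE e r) r"
    using assms(1) by (auto simp: C1_def)
  have "(\<lambda>j. (g s + c) (n + j)) = r"
    using g_Vn[of s] by (simp add: pr(3) ext_vec_def lab_def fun_eq_iff)
  then have "syndrome y (g s + c) = (\<Sum>i<n. (g s i + p i) * y i)"
    by (simp add: syndrome_def pr(3) ext_vec_def)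
  also have "\<dots> = (\<Sum>i<n. g s i * y i)"
    using assms(2) pr(1) by (simp add: dual_def distrib_right sum.distrib)
  finally show ?thesis .
qed

lemma syndrome_eq_if_agree_off:
  assumes J: "J \<subseteq> {0..<n}" and y: "\<forall>i\<in>J. y i = 0" and agree: "\<forall>i. i \<notin> J \<longrightarrow> x i = x' i"
  shows "syndrome y x = syndrome y x'"
proof -
  have "n + j \<notin> J" for j
    using J by auto
  then have "(\<lambda>j. x (n + j)) = (\<lambda>j. x' (n + j))"
    using agree by simp
  then show ?thesis
    unfolding syndrome_def using y agree by (intro sum.cong refl) (metis mult_eq_0_iff)
qed

lemma not_authorized_if_dual_diff_vanishes:
  assumes J: "J \<subseteq> {0..<n}"
    and y: "y \<in> dual n F1 - dual n F0" "\<forall>i\<in>J. y i = 0"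
  shows "\<not> authorized n e k f1 G01 G1 GE J"
proof -
  obtain f where f: "f \<in> F0" "(\<Sum>i<n. f i * y i) \<noteq> 0"
    using y(1) by (auto simp: dual_def)
  then obtain s p where sp: "s \<in> Vn k" "p \<in> F1" "f = g s + p"
    by (auto simp: F0_eq)
  have "(\<Sum>i<n. p i * y i) = 0"
    using y(1) sp(2) by (simp add: dual_def)
  then have gs: "(\<Sum>i<n. g s i * y i) \<noteq> 0"
    using f(2) sp(3) by (simp add: distrib_right sum.distrib)
  then have "s \<noteq> 0" by auto
  moreover have "enc_amp n e k f1 G01 G1 GE s x * enc_amp n e k f1 G01 G1 GE 0 x' = 0"
    if agree: "\<forall>i. i \<notin> J \<longrightarrow> x i = x' i" for x x'
  proof (rule ccontr)
    assume "enc_amp n e k f1 G01 G1 GE s x * enc_amp n e k f1 G01 G1 GE 0 x' \<noteq> 0"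
    then have "x - g s \<in> C1" "x' \<in> C1"
      using sp(1) by (auto simp: enc_amp_eq split: if_splits)
    then have "syndrome y x = (\<Sum>i<n. g s i * y i)" "syndrome y x' = 0"
      using syndrome_coset[of "x - g s" y s] syndrome_coset[of x' y 0] y(1) by auto
    moreover have "syndrome y x = syndrome y x'"
      using J y(2) agree by (rule syndrome_eq_if_agree_off)
    ultimately show False using gs by simp
  qed
  ultimately show ?thesis
    using not_recoverable_if_environment_distinguishes[OF sp(1) lab_zero]
    by (simp add: authorized_iff_recoverable)
qed

lemma agrees_off_with_F1:
  assumes "s \<in> Vn k" and no_dual: "\<forall>y\<in>dual n F1 - dual n F0. \<exists>i\<in>J. y i \<noteq> 0"
  shows "\<exists>p\<in>F1. \<forall>i<n. i \<notin> J \<longrightarrow> g s i = p i"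
proof (rule ccontr)
  assume "\<not> (\<exists>p\<in>F1. \<forall>i<n. i \<notin> J \<longrightarrow> g s i = p i)"
  then obtain y where y: "y \<in> dual n F1" "(\<Sum>i<n. g s i * y i) \<noteq> 0" "\<forall>i\<in>J. y i = 0"
    using separating_dual_codeword_vanishing_on[OF code1 g_Vn] by blast
  moreover have "y \<notin> dual n F0"
    using g_in_F0[OF assms(1)] y(2) by (auto simp: dual_def)
  ultimately show False using no_dual by blast
qed

lemma secret_determined_on_J:
  assumes J: "J \<subseteq> {0..<n}"
    and no_code_sum: "\<forall>x\<in>code_sum F0 E - code_sum F1 E. \<exists>i\<in>J. x i \<noteq> 0"
    and s: "s \<in> Vn k" "s' \<in> Vn k" and v: "v \<in> C1" "v' \<in> C1"
    and eq: "\<forall>i\<in>J. (g s + v) i = (g s' + v') i"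
  shows "s = s'"
proof -
  obtain p r p' r' where pr: "p \<in> F1" "v = ext_vec n (p + comb GE e r) r"
    "p' \<in> F1" "v' = ext_vec n (p' + comb GE e r') r'"
    using v by (auto simp: C1_def)
  define z where "z = (g (s - s') + (p - p')) + comb GE e (r - r')"
  have "p - p' \<in> F0"
    using linear_subspace_diff[OF subspace_F1 pr(1,3)] sub by blast
  then have "g (s - s') + (p - p') \<in> F0"
    using linear_subspace_add[OF subspace_F0 g_in_F0[OF lab_diff[OF s]]] by blast
  then have "z \<in> code_sum F0 E"
    unfolding z_def using comb_in_E by (rule mem_code_sum)
  moreover have "\<forall>i\<in>J. z i = 0"
  proof
    fix i assume i: "i \<in> J"
    then have "i < n" using J by auto
    then show "z i = 0"
      using bspec[OF eq i] pr(2,4) by (simp add: z_def ext_vec_def comb_diff algebra_simps)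
  qed
  ultimately have "z \<in> code_sum F1 E"
    using no_code_sum by blast
  moreover have "p - p' \<in> code_sum F1 E" "comb GE e (r - r') \<in> code_sum F1 E"
    using mem_code_sum[OF linear_subspace_diff[OF subspace_F1 pr(1,3)]
        linear_subspace_zero[OF subspace_E]]
      mem_code_sum[OF linear_subspace_zero[OF subspace_F1] comb_in_E] by simp_all
  ultimately have "z - comb GE e (r - r') - (p - p') \<in> code_sum F1 E"
    using linear_subspace_diff[OF linear_subspace_code_sum[OF subspace_F1 subspace_E]] by simp
  then have "g (s - s') \<in> code_sum F1 E"
    by (simp add: z_def)
  then show "s = s'"
    using eq_0_if_g_in_F1_plus_E[OF lab_diff[OF s]] by simp
qed

lemma authorized_if_no_diff_vanishes:
  assumes J: "J \<subseteq> {0..<n}"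
    and no_code_sum: "\<forall>x\<in>code_sum F0 E - code_sum F1 E. \<exists>i\<in>J. x i \<noteq> 0"
    and no_dual: "\<forall>y\<in>dual n F1 - dual n F0. \<exists>i\<in>J. y i \<noteq> 0"
  shows "authorized n e k f1 G01 G1 GE J"
proof -
  obtain pt where pt: "\<And>s. s \<in> Vn k \<Longrightarrow> pt s \<in> F1"
    "\<And>s i. s \<in> Vn k \<Longrightarrow> i < n \<Longrightarrow> i \<notin> J \<Longrightarrow> g s i = pt s i"
    using agrees_off_with_F1[OF _ no_dual] by metis
  then have pt_C1: "s \<in> Vn k \<Longrightarrow> pt s \<in> C1" for s
    using F1_subset_C1 by blast
  have "decodable_encoding (n + e) J k C1 (\<lambda>s. g s - pt s) amplitude (enc_amp n e k f1 G01 G1 GE)"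
  proof
    show "J \<subseteq> {0..<n + e}" using J by auto
    show "C1 \<subseteq> lab {0..<n + e}" by (rule C1_lab)
    show "g s - pt s \<in> lab J" if s: "s \<in> Vn k" for s
    proof -
      have "(g s - pt s) i = 0" if "i \<notin> J" for i
      proof (cases "i < n")
        case True then show ?thesis using pt(2)[OF s True that] by simp
      next
        case False then show ?thesis using g_Vn[of s] F1_Vn pt(1)[OF s] by (auto simp: lab_def)
      qed
      then show ?thesis by (simp add: lab_def)
    qed
    show "enc_amp n e k f1 G01 G1 GE t x = (if x - (g t - pt t) \<in> C1 then amplitude else 0)"
      if t: "t \<in> Vn k" for t x
    proof -
      have "x - (g t - pt t) \<in> C1 \<longleftrightarrow> x - g t \<in> C1"
        using C1_diff[OF _ pt_C1[OF t], of "x - (g t - pt t)"]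
          C1_add[OF _ pt_C1[OF t], of "x - g t"]
        by (auto simp: algebra_simps)
      then show ?thesis using t by (simp add: enc_amp_eq)
    qed
    show "t = t'" if t: "t \<in> Vn k" "t' \<in> Vn k" and c: "c \<in> C1" "c' \<in> C1"
      and eq: "\<forall>i\<in>J. (g t - pt t) i + c i = (g t' - pt t') i + c' i" for t t' c c'
    proof (rule secret_determined_on_J[OF J no_code_sum t])
      show "c - pt t \<in> C1" "c' - pt t' \<in> C1" using C1_diff c pt_C1 t by blast+
      show "\<forall>i\<in>J. (g t + (c - pt t)) i = (g t' + (c' - pt t')) i"
        using eq by (simp add: algebra_simps)
    qed
    show "amplitude * cnj amplitude * of_nat (card C1) = 1" by (rule amplitude_norm)
  qed
  then show ?thesis
    by (simp add: authorized_iff_recoverable decodable_encoding.recoverable)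
qed

lemma authorized_iff:
  assumes "J \<subseteq> {0..<n}"
  shows "authorized n e k f1 G01 G1 GE J \<longleftrightarrow>
    (\<forall>x\<in>(code_sum F0 E - code_sum F1 E) \<union> (dual n F1 - dual n F0). \<exists>i\<in>J. x i \<noteq> 0)"
  using not_authorized_if_code_sum_diff_vanishes[OF assms]
    not_authorized_if_dual_diff_vanishes[OF assms]
    authorized_if_no_diff_vanishes[OF assms] by blast

lemma code_sum_diff_nonempty: "code_sum F0 E - code_sum F1 E \<noteq> {}"
proof -
  obtain f where f: "f \<in> F0" "f \<notin> F1" using sub by blast
  have "f \<in> code_sum F0 E"
    using mem_code_sum[OF f(1) linear_subspace_zero[OF subspace_E]] by simp
  moreover have "f \<notin> code_sum F1 E"
  proof
    assume "f \<in> code_sum F1 E"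
    then obtain p x where px: "p \<in> F1" "x \<in> E" "f = p + x"
      by (auto simp: code_sum_eq)
    then have "f - p \<in> F0"
      using linear_subspace_diff[OF subspace_F0 f(1)] sub by blast
    then have "f - p = 0"
      using px cap by auto
    then show False using f(2) px(1) by simp
  qed
  ultimately show ?thesis by blast
qed

lemma dual_diff_nonempty: "dual n F1 - dual n F0 \<noteq> {}"
proof -
  obtain f where f: "f \<in> F0" "f \<notin> F1" using sub by blast
  have "\<not> (\<exists>p\<in>F1. \<forall>i<n. i \<notin> {} \<longrightarrow> f i = p i)"
  proof
    assume "\<exists>p\<in>F1. \<forall>i<n. i \<notin> {} \<longrightarrow> f i = p i"
    then obtain p where "p \<in> F1" "\<forall>i<n. f i = p i" by blast
    moreover have "f \<in> Vn n" "p \<in> Vn n" using f(1) \<open>p \<in> F1\<close> F0_Vn F1_Vn by auto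
    ultimately have "f i = p i" for i
      by (cases "i < n") (auto simp: lab_def)
    then have "f = p" by auto
    then show False using f(2) \<open>p \<in> F1\<close> by simp
  qed
  then obtain y where "y \<in> dual n F1" "(\<Sum>i<n. f i * y i) \<noteq> 0"
    using separating_dual_codeword_vanishing_on[OF code1] f(1) F0_Vn by blast
  then show ?thesis using f(1) by (auto simp: dual_def)
qed

lemma finite_code_sum_dual_diff:
  "finite ((code_sum F0 E - code_sum F1 E) \<union> (dual n F1 - dual n F0))"
proof (rule finite_subset)
  show "(code_sum F0 E - code_sum F1 E) \<union> (dual n F1 - dual n F0) \<subseteq> Vn n"
    using F0_Vn E_Vn by (auto simp: code_sum_eq dual_def intro: lab_add)
qed (rule finite_lab, simp)

end

section \<open>Thresholds\<close>

lemma wt_le_if_vanishes: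
  assumes "J \<subseteq> {0..<n}" "\<forall>i\<in>J. x i = 0"
  shows "wt n x \<le> n - card J"
proof -
  have "wt n x \<le> card ({0..<n} - J)"
    unfolding wt_def using assms(2) by (intro card_mono) auto
  also have "\<dots> = n - card J"
    using assms(1) by (simp add: card_Diff_subset finite_subset)
  finally show ?thesis .
qed

lemma card_zeros: "card {i. i < n \<and> x i = 0} = n - wt n x"
proof -
  have "{i. i < n \<and> x i = 0} = {0..<n} - {i. i < n \<and> x i \<noteq> 0}"
    "{i. i < n \<and> x i \<noteq> 0} \<subseteq> {0..<n}" by auto
  then show ?thesis by (simp add: wt_def card_Diff_subset finite_subset)
qed

lemma all_subsets_meet_supports_iff:
  fixes X :: "(nat \<Rightarrow> 'a::zero) set"
  assumes "finite X" "X \<noteq> {}"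
  shows "(\<forall>J. J \<subseteq> {0..<n} \<and> card J = \<tau> \<longrightarrow> (\<forall>x\<in>X. \<exists>i\<in>J. x i \<noteq> 0))
    \<longleftrightarrow> n - Min (wt n ` X) + 1 \<le> \<tau>"
proof
  assume meet: "\<forall>J. J \<subseteq> {0..<n} \<and> card J = \<tau> \<longrightarrow> (\<forall>x\<in>X. \<exists>i\<in>J. x i \<noteq> 0)"
  have "Min (wt n ` X) \<in> wt n ` X"
    using assms by (intro Min_in) auto
  then obtain x0 where x0: "x0 \<in> X" "wt n x0 = Min (wt n ` X)"
    by (metis imageE)
  show "n - Min (wt n ` X) + 1 \<le> \<tau>"
  proof (rule ccontr)
    assume "\<not> n - Min (wt n ` X) + 1 \<le> \<tau>"
    then have "\<tau> \<le> card {i. i < n \<and> x0 i = 0}"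
      using x0(2) by (simp add: card_zeros)
    then obtain J where J: "J \<subseteq> {i. i < n \<and> x0 i = 0}" "card J = \<tau>"
      by (rule obtain_subset_with_card_n)
    then have "J \<subseteq> {0..<n}" by auto
    then obtain i where "i \<in> J" "x0 i \<noteq> 0"
      using meet J(2) x0(1) by blast
    then show False using J(1) by auto
  qed
next
  assume \<tau>: "n - Min (wt n ` X) + 1 \<le> \<tau>"
  show "\<forall>J. J \<subseteq> {0..<n} \<and> card J = \<tau> \<longrightarrow> (\<forall>x\<in>X. \<exists>i\<in>J. x i \<noteq> 0)"
  proof (intro allI impI ballI)
    fix J x assume J: "J \<subseteq> {0..<n} \<and> card J = \<tau>" and x: "x \<in> X"
    show "\<exists>i\<in>J. x i \<noteq> 0"
    proof (rule ccontr)
      assume "\<not> (\<exists>i\<in>J. x i \<noteq> 0)"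
      then have "wt n x \<le> n - \<tau>"
        using wt_le_if_vanishes[of J n x] J by auto
      moreover have "\<tau> \<le> n"
        using J card_mono[of "{0..<n}" J] by auto
      moreover have "Min (wt n ` X) \<le> wt n x"
        using assms(1) x by simp
      ultimately show False using \<tau> by linarith
    qed
  qed
qed

theorem corollary2:
  fixes n e k f1 :: nat
    and F0 F1 :: "(nat \<Rightarrow> 'a::{field,finite}) set"
    and G01 G1 GE :: "nat \<Rightarrow> nat \<Rightarrow> 'a"
  assumes "linear_code n F0" and "linear_code n F1" and "F1 \<subset> F0"
    and "generator_matrix G1 f1 n F1"
    and "generator_matrix (stack G01 k G1) (k + f1) n F0"
    and "is_matrix GE e n"
    and "F0 \<inter> rowspace GE e = {zerov}"
  shows "(\<forall>J. J \<subseteq> {0..<n} \<and> card J = \<tau> \<longrightarrow> authorized n e k f1 G01 G1 GE J)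
     \<longleftrightarrow> \<tau> \<ge> n - min (wt_diff n (code_sum F0 (rowspace GE e)) (code_sum F1 (rowspace GE e)))
                        (wt_diff n (dual n F1) (dual n F0)) + 1"
proof -
  interpret ecss n e k f1 F0 F1 G01 G1 GE
    using assms by unfold_locales
  let ?X = "(code_sum F0 E - code_sum F1 E) \<union> (dual n F1 - dual n F0)"
  have "(\<forall>J. J \<subseteq> {0..<n} \<and> card J = \<tau> \<longrightarrow> authorized n e k f1 G01 G1 GE J)
      \<longleftrightarrow> (\<forall>J. J \<subseteq> {0..<n} \<and> card J = \<tau> \<longrightarrow> (\<forall>x\<in>?X. \<exists>i\<in>J. x i \<noteq> 0))"
    by (auto simp: authorized_iff)
  also have "\<dots> \<longleftrightarrow> n - Min (wt n ` ?X) + 1 \<le> \<tau>"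
    using finite_code_sum_dual_diff code_sum_diff_nonempty
    by (intro all_subsets_meet_supports_iff) auto
  also have "Min (wt n ` ?X)
      = min (wt_diff n (code_sum F0 E) (code_sum F1 E)) (wt_diff n (dual n F1) (dual n F0))"
    using finite_code_sum_dual_diff code_sum_diff_nonempty dual_diff_nonempty
    by (simp add: wt_diff_def image_Un Min_Un)
  finally show ?thesis .
qed

end
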